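(* Let $X_1,X_2,X_3$ be independent real variables ranging over the open positive orthant $(0,\infty)^3$, and consider the first-order linear system of partial differential equations for an unknown smooth function $\tau=\tau(X_1,X_2,X_3)$: $$\Big(X_1(X_1+2X_2+2X_3)\frac{\partial}{\partial X_1}+X_2(X_2+2X_3)\frac{\partial}{\partial X_2}+X_3^2\frac{\partial}{\partial X_3}\Big)\tau=0,\qquad \Big(X_1\frac{\partial}{\partial X_1}+X_2\frac{\partial}{\partial X_2}+X_3\frac{\partial}{\partial X_3}\Big)\tau=0 .$$ Then the function $$\tau_1^{(2)}(X_1,X_2,X_3)=\frac{(X_1+X_2)(X_2+X_3)}{X_2\,(X_1+X_2+X_3)}$$ is a solution of this system, and it is the only nontrivial solution up to functional dependence: every solution is (locally) of the form $F\big(\tau_1^{(2)}\big)$ for some function $F$ of one variable.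
   Context: This system arises in the construction of the lattice $W_2$ algebra (the $\mathfrak{sl}_2$ case): the first operator comes from the action of the screening operator $X_1+X_2+X_3$ via the bracket $\{X_i,X_j\}=2X_iX_j$ for $i<j$, $\{X_i,X_i\}=0$, and the second operator is the degree (Euler) operator, so solutions are degree-zero invariants. *)

theory Defs
  imports "HOL-Analysis.Analysis"
begin

definition orthant :: "(real^3) set" where
  "orthant = {x. \<forall>i. 0 < x $ i}"

definition screenField :: "real^3 \<Rightarrow> real^3" where
  "screenField x = vector [x$1 * (x$1 + 2 * x$2 + 2 * x$3), x$2 * (x$2 + 2 * x$3), (x$3)^2]"

definition eulerField :: "real^3 \<Rightarrow> real^3" where
  "eulerField x = x"

text \<open>A first order operator sum_i a_i(x) d/dX_i applied to a differentiable f at x is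
  the Frechet derivative of f at x applied to the coefficient vector a(x).\<close>
definition solves_system :: "(real^3 \<Rightarrow> real) \<Rightarrow> bool" where
  "solves_system f \<longleftrightarrow>
     (\<forall>x\<in>orthant. f differentiable (at x) \<and>
        frechet_derivative f (at x) (screenField x) = 0 \<and>
        frechet_derivative f (at x) (eulerField x) = 0)"

fun Ck_on_orthant :: "nat \<Rightarrow> (real^3 \<Rightarrow> real) \<Rightarrow> bool" where
  "Ck_on_orthant 0 f = continuous_on orthant f"
| "Ck_on_orthant (Suc k) f =
     (continuous_on orthant f \<and> (\<forall>x\<in>orthant. f differentiable (at x)) \<and>
      (\<forall>i. Ck_on_orthant k (\<lambda>x. frechet_derivative f (at x) (axis i 1))))"

definition smooth_on_orthant :: "(real^3 \<Rightarrow> real) \<Rightarrow> bool" where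
  "smooth_on_orthant f \<longleftrightarrow> (\<forall>k. Ck_on_orthant k f)"

definition tau12 :: "real^3 \<Rightarrow> real" where
  "tau12 x = ((x$1 + x$2) * (x$2 + x$3)) / (x$2 * (x$1 + x$2 + x$3))"

end

theory Submission
  imports Defs
begin

text \<open>Pass to the coordinates \<open>a = (1/(x\<^sub>1+x\<^sub>2+x\<^sub>3), 1/(x\<^sub>2+x\<^sub>3), 1/x\<^sub>3)\<close>, which map
  the orthant onto the convex cone \<open>0 < a\<^sub>1 < a\<^sub>2 < a\<^sub>3\<close>. There the screening field becomes
  the constant field \<open>-(1,1,1)\<close>, the Euler field becomes \<open>-a\<close>, and
  \<open>tau12\<close> becomes \<open>(a\<^sub>3 - a\<^sub>1)/(a\<^sub>3 - a\<^sub>2)\<close>. If two points \<open>a, b\<close> of the cone have the same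
  value of this ratio, then at every point \<open>c\<close> of the segment from \<open>a\<close> to \<open>b\<close> the direction
  \<open>b - a\<close> is a combination of \<open>(1,1,1)\<close> and \<open>c\<close>, so every solution has zero derivative
  along the segment and takes the same value at \<open>a\<close> and \<open>b\<close>. Hence every solution is a
  function of \<open>tau12\<close> on the whole orthant.\<close>

lemma orthant_iff: "x \<in> orthant \<longleftrightarrow> 0 < x$1 \<and> 0 < x$2 \<and> 0 < x$3"
  by (simp add: orthant_def forall_3)

lemma open_orthant: "open orthant"
proof -
  have "orthant = {x. 0 < x$1} \<inter> {x. 0 < x$2} \<inter> {x::real^3. 0 < x$3}"
    by (auto simp: orthant_iff)
  moreover have "open {x::real^3. 0 < x$i}" for i
    by (rule open_Collect_less) (auto intro: continuous_intros)
  ultimately show ?thesis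
    by (metis open_Int)
qed

lemmas has_derivative_vec_nth [derivative_intros] =
  bounded_linear.has_derivative[OF bounded_linear_vec_nth]

lemma eq_if_derivative_vanishes_along_segment:
  fixes g :: "'a::real_normed_vector \<Rightarrow> real"
  assumes "\<And>c. c \<in> closed_segment a b \<Longrightarrow> \<exists>g'. (g has_derivative g') (at c) \<and> g' (b - a) = 0"
  shows "g b = g a"
proof -
  define p where "p t = a + t *\<^sub>R (b - a)" for t
  have deriv: "DERIV (g \<circ> p) t :> 0" if "0 \<le> t" "t \<le> 1" for t
  proof -
    have "p t \<in> closed_segment a b"
      using that by (auto simp: p_def closed_segment_def algebra_simps intro!: exI[of _ t])
    then obtain g' where g': "(g has_derivative g') (at (p t))" "g' (b - a) = 0"
      using assms by blast
    have "(p has_derivative (\<lambda>h. h *\<^sub>R (b - a))) (at t)"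
      unfolding p_def[abs_def] by (auto intro!: derivative_eq_intros)
    from diff_chain_at[OF this g'(1)] have "((g \<circ> p) has_derivative (\<lambda>h. h *\<^sub>R g' (b - a))) (at t)"
      using has_derivative_linear[OF g'(1)] by (simp add: o_def linear_scale)
    with g'(2) show ?thesis
      by (auto intro: has_derivative_imp_has_field_derivative)
  qed
  then have "continuous_on {0..1} (g \<circ> p)"
    by (meson DERIV_isCont atLeastAtMost_iff continuous_at_imp_continuous_on)
  with deriv have "(g \<circ> p) 1 = (g \<circ> p) 0"
    using DERIV_isconst_end[of 0 1 "g \<circ> p"] by simp
  then show ?thesis
    by (simp add: p_def)
qed

lemma tau12_has_derivative:
  assumes "x \<in> orthant"
  shows "(tau12 has_derivative (\<lambda>h.
     (x$2 * x$3 * (x$2 + x$3) * h$1 - x$1 * x$3 * (x$1 + 2 * x$2 + x$3) * h$2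
      + x$1 * x$2 * (x$1 + x$2) * h$3) / (x$2 * (x$1 + x$2 + x$3))\<^sup>2)) (at x)"
proof -
  have "0 < x$1" "0 < x$2" "0 < x$3"
    using assms by (simp_all add: orthant_iff)
  then have "x$2 * (x$1 + x$2 + x$3) \<noteq> 0"
    by simp
  with \<open>0 < x$2\<close> show ?thesis
    unfolding tau12_def[abs_def]
    by (auto intro!: has_derivative_eq_rhs[OF derivative_eq_intros(1)] derivative_eq_intros
        simp: fun_eq_iff field_simps power2_eq_square)
qed

lemma solves_system_tau12: "solves_system tau12"
  unfolding solves_system_def
proof
  fix x :: "real^3"
  assume x: "x \<in> orthant"
  then have "0 < x$1" "0 < x$2" "0 < x$3"
    by (simp_all add: orthant_iff)
  with tau12_has_derivative[OF x] show "tau12 differentiable at x \<and>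
      frechet_derivative tau12 (at x) (screenField x) = 0 \<and>
      frechet_derivative tau12 (at x) (eulerField x) = 0"
    by (auto simp: differentiable_def frechet_derivative_at[symmetric]
        screenField_def eulerField_def field_simps power2_eq_square)
qed

definition increasing_cone :: "(real^3) set" where
  "increasing_cone = {a. 0 < a$1 \<and> a$1 < a$2 \<and> a$2 < a$3}"

definition tail_sum_recip :: "real^3 \<Rightarrow> real^3" where
  "tail_sum_recip x = vector [1 / (x$1 + x$2 + x$3), 1 / (x$2 + x$3), 1 / x$3]"

definition tail_sum_recip_inv :: "real^3 \<Rightarrow> real^3" where
  "tail_sum_recip_inv a =
     (1/a$1 - 1/a$2) *\<^sub>R axis 1 1 + (1/a$2 - 1/a$3) *\<^sub>R axis 2 1 + (1/a$3) *\<^sub>R axis 3 1"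

definition affine_ratio :: "real^3 \<Rightarrow> real" where
  "affine_ratio a = (a$3 - a$1) / (a$3 - a$2)"

lemma convex_increasing_cone: "convex increasing_cone"
proof (rule convexI)
  fix a b :: "real^3" and u v :: real
  assume "a \<in> increasing_cone" "b \<in> increasing_cone" "0 \<le> u" "0 \<le> v" "u + v = 1"
  then show "u *\<^sub>R a + v *\<^sub>R b \<in> increasing_cone"
    using convex_bound_lt[of "a$i - a$j" 0 "b$i - b$j" u v for i j]
      convex_bound_lt[of "- a$1" 0 "- b$1" u v]
    by (auto simp: increasing_cone_def algebra_simps)
qed

lemma tail_sum_recip_inv_nth:
  "tail_sum_recip_inv a $ 1 = 1/a$1 - 1/a$2"
  "tail_sum_recip_inv a $ 2 = 1/a$2 - 1/a$3"
  "tail_sum_recip_inv a $ 3 = 1/a$3"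
  by (simp_all add: tail_sum_recip_inv_def axis_def)

lemma tail_sum_recip_in_increasing_cone:
  "x \<in> orthant \<Longrightarrow> tail_sum_recip x \<in> increasing_cone"
  by (auto simp: orthant_iff increasing_cone_def tail_sum_recip_def intro!: divide_strict_left_mono)

lemma tail_sum_recip_inv_in_orthant:
  "a \<in> increasing_cone \<Longrightarrow> tail_sum_recip_inv a \<in> orthant"
  by (auto simp: orthant_iff increasing_cone_def tail_sum_recip_inv_nth field_simps)

lemma tail_sum_recip_inv_tail_sum_recip:
  "x \<in> orthant \<Longrightarrow> tail_sum_recip_inv (tail_sum_recip x) = x"
  by (auto simp: orthant_iff vec_eq_iff forall_3 tail_sum_recip_inv_nth tail_sum_recip_def
      field_simps)

lemma tau12_eq_affine_ratio:
  assumes "x \<in> orthant"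
  shows "tau12 x = affine_ratio (tail_sum_recip x)"
proof -
  have pos: "0 < x$1" "0 < x$2" "0 < x$3"
    using assms by (simp_all add: orthant_iff)
  then have "tail_sum_recip x $ 3 - tail_sum_recip x $ 1 = (x$1 + x$2) / (x$3 * (x$1 + x$2 + x$3))"
    "tail_sum_recip x $ 3 - tail_sum_recip x $ 2 = x$2 / (x$3 * (x$2 + x$3))"
    by (simp_all add: tail_sum_recip_def field_simps)
  with pos show ?thesis
    by (simp add: tau12_def affine_ratio_def)
qed

definition tail_sum_recip_inv_deriv :: "real^3 \<Rightarrow> real^3 \<Rightarrow> real^3" where
  "tail_sum_recip_inv_deriv a h =
     (h$2 / (a$2)\<^sup>2 - h$1 / (a$1)\<^sup>2) *\<^sub>R axis 1 1 + (h$3 / (a$3)\<^sup>2 - h$2 / (a$2)\<^sup>2) *\<^sub>R axis 2 1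
     + (- h$3 / (a$3)\<^sup>2) *\<^sub>R axis 3 1"

lemma tail_sum_recip_inv_has_derivative:
  assumes "a \<in> increasing_cone"
  shows "(tail_sum_recip_inv has_derivative tail_sum_recip_inv_deriv a) (at a)"
proof -
  have "a$1 \<noteq> 0" "a$2 \<noteq> 0" "a$3 \<noteq> 0"
    using assms by (auto simp: increasing_cone_def)
  then show ?thesis
    unfolding tail_sum_recip_inv_def[abs_def] tail_sum_recip_inv_deriv_def[abs_def]
    by (auto intro!: has_derivative_eq_rhs[OF derivative_eq_intros(1)] derivative_eq_intros
        simp: fun_eq_iff vec_eq_iff forall_3 axis_def field_simps power2_eq_square)
qed

lemma tail_sum_recip_inv_deriv_one:
  assumes "a \<in> increasing_cone"
  shows "tail_sum_recip_inv_deriv a 1 = - screenField (tail_sum_recip_inv a)"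
  using assms
  by (auto simp: increasing_cone_def vec_eq_iff forall_3 tail_sum_recip_inv_deriv_def
      tail_sum_recip_inv_nth screenField_def axis_def field_simps power2_eq_square)

lemma tail_sum_recip_inv_deriv_self:
  assumes "a \<in> increasing_cone"
  shows "tail_sum_recip_inv_deriv a a = - eulerField (tail_sum_recip_inv a)"
  using assms
  by (auto simp: increasing_cone_def vec_eq_iff forall_3 tail_sum_recip_inv_deriv_def
      tail_sum_recip_inv_nth eulerField_def axis_def field_simps power2_eq_square)

lemma diff_in_span_one_and_segment_point:
  fixes a b c :: "real^3"
  assumes "affine_ratio a = affine_ratio b" "a$2 \<noteq> a$3" "b$2 \<noteq> b$3"
    and "c \<in> closed_segment a b" "c$2 \<noteq> c$3"
  shows "\<exists>\<alpha> \<beta>. b - a = \<alpha> *\<^sub>R 1 + \<beta> *\<^sub>R c"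
proof -
  obtain u where c: "c = (1 - u) *\<^sub>R a + u *\<^sub>R b"
    using assms(4) by (auto simp: closed_segment_def)
  define d where "d = b - a"
  define \<beta> where "\<beta> = (d$3 - d$2) / (c$3 - c$2)"
  define \<alpha> where "\<alpha> = d$3 - \<beta> * c$3"
  have cross: "(a$3 - a$1) * (b$3 - b$2) = (b$3 - b$1) * (a$3 - a$2)"
    using assms(1-3) by (simp add: affine_ratio_def frac_eq_eq)
  have "d$1 - d$3 = \<beta> * (c$1 - c$3)"
  proof -
    have "(d$1 - d$3) * (c$3 - c$2) = (d$3 - d$2) * (c$1 - c$3)"
      using cross by (simp add: c d_def algebra_simps)
    with assms(5) show ?thesis
      by (simp add: \<beta>_def field_simps)
  qed
  moreover have "d$2 - d$3 = \<beta> * (c$2 - c$3)"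
    using assms(5) by (simp add: \<beta>_def field_simps)
  ultimately have "d = \<alpha> *\<^sub>R 1 + \<beta> *\<^sub>R c"
    by (auto simp: vec_eq_iff forall_3 \<alpha>_def algebra_simps)
  then show ?thesis
    unfolding d_def by blast
qed

lemma solves_system_const_on_affine_ratio_levels:
  assumes sol: "solves_system f"
    and a: "a \<in> increasing_cone" and b: "b \<in> increasing_cone"
    and eq: "affine_ratio a = affine_ratio b"
  shows "f (tail_sum_recip_inv a) = f (tail_sum_recip_inv b)"
proof -
  have "(f \<circ> tail_sum_recip_inv) b = (f \<circ> tail_sum_recip_inv) a"
  proof (rule eq_if_derivative_vanishes_along_segment[where g = "f \<circ> tail_sum_recip_inv"])
    fix c assume "c \<in> closed_segment a b"
    then have c: "c \<in> increasing_cone"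
      using closed_segment_subset[OF a b convex_increasing_cone] by blast
    then obtain \<alpha> \<beta> where dir: "b - a = \<alpha> *\<^sub>R 1 + \<beta> *\<^sub>R c"
      using diff_in_span_one_and_segment_point[OF eq _ _ \<open>c \<in> closed_segment a b\<close>] a b
      by (fastforce simp: increasing_cone_def)
    define x where "x = tail_sum_recip_inv c"
    define f' where "f' = frechet_derivative f (at x)"
    have "x \<in> orthant"
      unfolding x_def using c by (rule tail_sum_recip_inv_in_orthant)
    with sol have f': "(f has_derivative f') (at x)"
      and "f' (screenField x) = 0" "f' (eulerField x) = 0"
      by (auto simp: solves_system_def f'_def frechet_derivative_works)
    moreover have "linear f'"
      using f' by (rule has_derivative_linear)
    ultimately have "f' (tail_sum_recip_inv_deriv c (b - a)) = 0"
      using has_derivative_linear[OF tail_sum_recip_inv_has_derivative[OF c]]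
      by (simp add: dir linear_add linear_scale tail_sum_recip_inv_deriv_one[OF c]
          tail_sum_recip_inv_deriv_self[OF c] x_def linear_diff linear_neg)
    moreover have "((f \<circ> tail_sum_recip_inv) has_derivative (f' \<circ> tail_sum_recip_inv_deriv c)) (at c)"
      using diff_chain_at[OF tail_sum_recip_inv_has_derivative[OF c] f'[unfolded x_def]] .
    ultimately show "\<exists>g'. ((f \<circ> tail_sum_recip_inv) has_derivative g') (at c) \<and> g' (b - a) = 0"
      by auto
  qed
  then show ?thesis
    by simp
qed

lemma solves_system_const_on_tau12_levels:
  assumes "solves_system f" "x \<in> orthant" "y \<in> orthant" "tau12 x = tau12 y"
  shows "f x = f y"
  using solves_system_const_on_affine_ratio_levels[OF assms(1)
      tail_sum_recip_in_increasing_cone[OF assms(2)] tail_sum_recip_in_increasing_cone[OF assms(3)]]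
    assms(2-4)
  by (simp add: tau12_eq_affine_ratio tail_sum_recip_inv_tail_sum_recip)

lemma solves_system_factors_through_tau12:
  assumes "solves_system f"
  shows "\<exists>F. \<forall>x\<in>orthant. f x = F (tau12 x)"
proof (intro exI ballI)
  fix x assume x: "x \<in> orthant"
  define y where "y = (SOME y. y \<in> orthant \<and> tau12 y = tau12 x)"
  have "y \<in> orthant \<and> tau12 y = tau12 x"
    unfolding y_def by (rule someI[of _ x]) (simp add: x)
  then have "f x = f y"
    using solves_system_const_on_tau12_levels[OF assms x] by simp
  then show "f x = f (SOME y. y \<in> orthant \<and> tau12 y = tau12 x)"
    by (simp add: y_def)
qed

theorem mainTheorem1:
  shows "solves_system tau12
     \<and> (\<exists>x\<in>orthant. \<exists>y\<in>orthant. tau12 x \<noteq> tau12 y)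
     \<and> (\<forall>f. smooth_on_orthant f \<and> solves_system f \<longrightarrow>
           (\<forall>p\<in>orthant. \<exists>U F. open U \<and> p \<in> U \<and> U \<subseteq> orthant \<and>
                (\<forall>x\<in>U. f x = (F :: real \<Rightarrow> real) (tau12 x))))"
proof (intro conjI allI impI ballI)
  show "solves_system tau12"
    by (rule solves_system_tau12)
  have "vector [1, 1, 1] \<in> orthant" "vector [1, 2, 1] \<in> orthant"
    by (simp_all add: orthant_iff)
  moreover have "tau12 (vector [1, 1, 1]) \<noteq> tau12 (vector [1, 2, 1])"
    by (simp add: tau12_def)
  ultimately show "\<exists>x\<in>orthant. \<exists>y\<in>orthant. tau12 x \<noteq> tau12 y"
    by blast
next
  fix f p
  assume "smooth_on_orthant f \<and> solves_system f" "p \<in> orthant"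
  then obtain F where "\<forall>x\<in>orthant. f x = F (tau12 x)"
    using solves_system_factors_through_tau12 by blast
  with \<open>p \<in> orthant\<close> open_orthant
  show "\<exists>U F. open U \<and> p \<in> U \<and> U \<subseteq> orthant \<and> (\<forall>x\<in>U. f x = F (tau12 x))"
    by blast
qed

end
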